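(* Let $d,N,L\in\mathbb{N}$ with $d+2<N$, and let $W^{(0)}\in\mathbb{R}^{N\times d}$, $W^{(\ell)}\in\mathbb{R}^{N\times N}$ ($1\le\ell\le L-1$) and $b^{(0)},\dots,b^{(L-1)}\in\mathbb{R}^N$ be fixed. Let $\mathscr{D}=\{(D^{(L-1)}(x),\dots,D^{(0)}(x)):x\in\mathbb{R}^d\}$. Then $|\mathscr{D}|\le\left(\frac{eN}{d+1}\right)^{L(d+1)}$.
   Context: For $v\in\mathbb{R}^N$, $\Delta(v)$ is the $N\times N$ diagonal matrix with diagonal entries $\mathbb{1}_{v_i>0}$. For $x\in\mathbb{R}^d$ set $x^{(0)}=x$ and recursively $D^{(\ell)}(x)=\Delta(W^{(\ell)}x^{(\ell)}+b^{(\ell)})$, $x^{(\ell+1)}=\mathrm{ReLU}(W^{(\ell)}x^{(\ell)}+b^{(\ell)})$ for $0\le\ell<L$, where $\mathrm{ReLU}(t)=\max\{0,t\}$ componentwise. *)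

theory Defs
  imports Complex_Main
begin

text \<open>Vectors in R^k are functions nat => real (entries with index >= k are 0 / ignored);
  matrices are functions nat => nat => real (row, column). The weights of the network are
  W :: nat => nat => nat => real (layer, row, column), biases b :: nat => nat => real
  (layer, row).\<close>

definition Delta :: "nat \<Rightarrow> (nat \<Rightarrow> real) \<Rightarrow> nat \<Rightarrow> nat \<Rightarrow> real" where
  "Delta N v = (\<lambda>i j. if i = j \<and> i < N \<and> v i > 0 then 1 else 0)"

definition in_dim :: "nat \<Rightarrow> nat \<Rightarrow> nat \<Rightarrow> nat" where
  "in_dim d N l = (if l = 0 then d else N)"

definition preact :: "nat \<Rightarrow> nat \<Rightarrow> (nat \<Rightarrow> nat \<Rightarrow> nat \<Rightarrow> real) \<Rightarrow> (nat \<Rightarrow> nat \<Rightarrow> real)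
    \<Rightarrow> nat \<Rightarrow> (nat \<Rightarrow> real) \<Rightarrow> nat \<Rightarrow> real" where
  "preact d N W b l y = (\<lambda>i. if i < N then (\<Sum>j < in_dim d N l. W l i j * y j) + b l i else 0)"

fun hidden :: "nat \<Rightarrow> nat \<Rightarrow> (nat \<Rightarrow> nat \<Rightarrow> nat \<Rightarrow> real) \<Rightarrow> (nat \<Rightarrow> nat \<Rightarrow> real)
    \<Rightarrow> (nat \<Rightarrow> real) \<Rightarrow> nat \<Rightarrow> nat \<Rightarrow> real" where
  "hidden d N W b x 0 = x"
| "hidden d N W b x (Suc l) = (\<lambda>i. max 0 (preact d N W b l (hidden d N W b x l) i))"

definition Dpat :: "nat \<Rightarrow> nat \<Rightarrow> (nat \<Rightarrow> nat \<Rightarrow> nat \<Rightarrow> real) \<Rightarrow> (nat \<Rightarrow> nat \<Rightarrow> real)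
    \<Rightarrow> (nat \<Rightarrow> real) \<Rightarrow> nat \<Rightarrow> nat \<Rightarrow> nat \<Rightarrow> real" where
  "Dpat d N W b x l = Delta N (preact d N W b l (hidden d N W b x l))"

definition patterns :: "nat \<Rightarrow> nat \<Rightarrow> nat \<Rightarrow> (nat \<Rightarrow> nat \<Rightarrow> nat \<Rightarrow> real) \<Rightarrow> (nat \<Rightarrow> nat \<Rightarrow> real)
    \<Rightarrow> (nat \<Rightarrow> nat \<Rightarrow> real) list set" where
  "patterns d N L W b =
     {map (Dpat d N W b x) (rev [0..<L]) | x. \<forall>j\<ge>d. x j = 0}"

end

theory Submission
  imports Defs
begin

text \<open>Fix the activation pattern of the first \<open>k\<close> layers. On the inputs producing it,
  every ReLU acts as a fixed 0/1 diagonal matrix, so the pre-activations of layer \<open>k\<close> are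
  \<open>N\<close> affine functions \<open>a\<^sub>i \<cdot> x + c\<^sub>i\<close> of \<open>x \<in> \<real>\<^sup>d\<close>, and the pattern of layer \<open>k\<close> is
  determined by the set \<open>{i. a\<^sub>i \<cdot> x + c\<^sub>i > 0}\<close>. These sets shatter no set \<open>S\<close> of
  \<open>d + 2\<close> indices: the vectors \<open>(a\<^sub>i, c\<^sub>i)\<close>, \<open>i \<in> S\<close>, satisfy a linear relation
  \<open>\<Sum> \<lambda>\<^sub>i (a\<^sub>i, c\<^sub>i) = 0\<close>, and no \<open>x\<close> can make exactly the \<open>i\<close> with \<open>\<lambda>\<^sub>i > 0\<close> positive.
  By Pajor's form of the Sauer--Shelah lemma there are at most
  \<open>(\<Sum>i\<le>d+1. N choose i) \<le> (e N / (d + 1)) ^ (d + 1)\<close> such sets, and multiplying over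
  the \<open>L\<close> layers gives the bound.\<close>

definition shatters :: "'a set set \<Rightarrow> 'a set \<Rightarrow> bool" where
  "shatters F S \<longleftrightarrow> (\<forall>T\<subseteq>S. \<exists>A\<in>F. A \<inter> S = T)"

definition shattered_sets :: "'a set set \<Rightarrow> 'a set \<Rightarrow> 'a set set" where
  "shattered_sets F X = {S. S \<subseteq> X \<and> shatters F S}"

lemma shatters_if_shatters_remove:
  assumes "shatters ((\<lambda>A. A - {x}) ` F) S" "x \<notin> S"
  shows "shatters F S"
  unfolding shatters_def
proof (intro allI impI)
  fix T assume "T \<subseteq> S"
  with assms(1) obtain A where "A \<in> F" "(A - {x}) \<inter> S = T"
    unfolding shatters_def by blast
  with assms(2) show "\<exists>A\<in>F. A \<inter> S = T" by blast
qed

lemma shatters_insert_if_shatters_pairs: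
  assumes "shatters {A \<in> F. x \<notin> A \<and> insert x A \<in> F} S" "x \<notin> S"
  shows "shatters F (insert x S)"
  unfolding shatters_def
proof (intro allI impI)
  fix T assume "T \<subseteq> insert x S"
  then have "T - {x} \<subseteq> S" by blast
  with assms(1) obtain A where A: "A \<in> F" "x \<notin> A" "insert x A \<in> F" "A \<inter> S = T - {x}"
    unfolding shatters_def by blast
  show "\<exists>A\<in>F. A \<inter> insert x S = T"
  proof (cases "x \<in> T")
    case True
    then show ?thesis using A by (intro bexI[of _ "insert x A"]) auto
  next
    case False
    then show ?thesis using A by (intro bexI[of _ A]) auto
  qed
qed

lemma card_eq_card_remove_image_plus_card_pairs:
  assumes "finite F"
  shows "card F = card ((\<lambda>A. A - {x}) ` F) + card {A \<in> F. x \<notin> A \<and> insert x A \<in> F}"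
proof -
  define Fa where "Fa = {A \<in> F. x \<notin> A}"
  define G where "G = (\<lambda>A. A - {x}) ` {A \<in> F. x \<in> A}"
  have fin: "finite Fa" "finite G" using assms by (auto simp: Fa_def G_def)
  have "inj_on (\<lambda>A. A - {x}) {A \<in> F. x \<in> A}" by (auto intro: inj_onI)
  then have "card G = card {A \<in> F. x \<in> A}" by (simp add: G_def card_image)
  moreover have "card F = card Fa + card {A \<in> F. x \<in> A}"
    using assms by (subst card_Un_disjoint[symmetric]) (auto simp: Fa_def intro: arg_cong[where f = card])
  moreover have image_eq: "(\<lambda>A. A - {x}) ` F = Fa \<union> G"
  proof (intro equalityI subsetI)
    fix B assume "B \<in> (\<lambda>A. A - {x}) ` F"
    then obtain A where "A \<in> F" "B = A - {x}" by blast
    then show "B \<in> Fa \<union> G" by (cases "x \<in> A") (auto simp: Fa_def G_def)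
  next
    fix B assume "B \<in> Fa \<union> G"
    then show "B \<in> (\<lambda>A. A - {x}) ` F"
      by (auto simp: Fa_def G_def intro: image_eqI[of _ _ B])
  qed
  moreover have pairs_eq: "{A \<in> F. x \<notin> A \<and> insert x A \<in> F} = Fa \<inter> G"
  proof (intro equalityI subsetI)
    fix A assume "A \<in> {A \<in> F. x \<notin> A \<and> insert x A \<in> F}"
    then show "A \<in> Fa \<inter> G" by (auto simp: Fa_def G_def intro: image_eqI[of _ _ "insert x A"])
  next
    fix A assume "A \<in> Fa \<inter> G"
    then obtain B where "B \<in> F" "x \<in> B" "A = B - {x}" by (auto simp: G_def)
    with \<open>A \<in> Fa \<inter> G\<close> show "A \<in> {A \<in> F. x \<notin> A \<and> insert x A \<in> F}"
      by (auto simp: Fa_def insert_absorb)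
  qed
  ultimately show ?thesis
    unfolding image_eq pairs_eq using card_Un_Int[OF fin] by linarith
qed

lemma card_le_card_shattered_sets:
  assumes "finite X" "F \<subseteq> Pow X"
  shows "card F \<le> card (shattered_sets F X)"
  using assms
proof (induction X arbitrary: F rule: finite_induct)
  case empty
  have "shattered_sets {{}} {} = ({{}} :: 'a set set)"
    by (auto simp: shattered_sets_def shatters_def)
  moreover from empty have "F = {} \<or> F = {{}}" by (simp add: subset_singleton_iff)
  ultimately show ?case by (elim disjE) simp_all
next
  case (insert x X)
  define F1 where "F1 = (\<lambda>A. A - {x}) ` F"
  define F2 where "F2 = {A \<in> F. x \<notin> A \<and> insert x A \<in> F}"
  have "F1 \<subseteq> Pow X" "F2 \<subseteq> Pow X" using insert.prems by (auto simp: F1_def F2_def)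
  then have IH: "card F1 \<le> card (shattered_sets F1 X)" "card F2 \<le> card (shattered_sets F2 X)"
    using insert.IH by blast+
  have notin: "x \<notin> S" if "S \<in> shattered_sets G X" for S G
    using that insert.hyps(2) by (auto simp: shattered_sets_def)
  have "shattered_sets F1 X \<subseteq> shattered_sets F (insert x X)"
    using insert.hyps(2) unfolding F1_def
    by (auto simp: shattered_sets_def intro: shatters_if_shatters_remove)
  moreover have "insert x ` shattered_sets F2 X \<subseteq> shattered_sets F (insert x X)"
    using insert.hyps(2) unfolding F2_def
    by (auto simp: shattered_sets_def intro: shatters_insert_if_shatters_pairs)
  ultimately have sub:
    "shattered_sets F1 X \<union> insert x ` shattered_sets F2 X \<subseteq> shattered_sets F (insert x X)"
    by blast
  have fin: "finite (shattered_sets F (insert x X))"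
    using insert.hyps(1) by (auto simp: shattered_sets_def intro: finite_subset[of _ "Pow (insert x X)"])
  have disj: "shattered_sets F1 X \<inter> insert x ` shattered_sets F2 X = {}"
    using notin by blast
  have inj: "inj_on (insert x) (shattered_sets F2 X)"
    using notin by (auto intro!: inj_onI simp: insert_ident)
  have "finite F"
    using insert.hyps(1) insert.prems by (auto intro: finite_subset[of F "Pow (insert x X)"])
  then have "card F = card F1 + card F2"
    unfolding F1_def F2_def by (rule card_eq_card_remove_image_plus_card_pairs)
  also have "\<dots> \<le> card (shattered_sets F1 X) + card (insert x ` shattered_sets F2 X)"
    using IH inj by (simp add: card_image)
  also have "\<dots> = card (shattered_sets F1 X \<union> insert x ` shattered_sets F2 X)"
    using disj sub fin by (intro card_Un_disjoint[symmetric]) (auto intro: finite_subset)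
  also have "\<dots> \<le> card (shattered_sets F (insert x X))"
    using sub fin by (rule card_mono[rotated])
  finally show ?case .
qed

lemma card_subsets_card_le:
  assumes "finite A"
  shows "card {S. S \<subseteq> A \<and> card S \<le> k} = (\<Sum>i\<le>k. card A choose i)"
proof -
  have "{S. S \<subseteq> A \<and> card S \<le> k} = (\<Union>i\<le>k. {S. S \<subseteq> A \<and> card S = i})" by auto
  then have "card {S. S \<subseteq> A \<and> card S \<le> k} = (\<Sum>i\<le>k. card {S. S \<subseteq> A \<and> card S = i})"
    using assms by (simp, intro card_UN_disjoint) (auto intro: finite_subset[of _ "Pow A"])
  also have "\<dots> = (\<Sum>i\<le>k. card A choose i)" using assms by (simp add: n_subsets)
  finally show ?thesis .
qed

lemma sum_choose_le_exp_power:
  assumes "1 \<le> k" "k \<le> n"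
  shows "real (\<Sum>i\<le>k. n choose i) \<le> (exp 1 * real n / real k) ^ k"
proof -
  define t where "t = real k / real n"
  have t: "0 < t" "t \<le> 1" using assms by (auto simp: t_def)
  have "t ^ k * real (\<Sum>i\<le>k. n choose i) = (\<Sum>i\<le>k. real (n choose i) * t ^ k)"
    by (simp add: sum_distrib_left mult.commute)
  also have "\<dots> \<le> (\<Sum>i\<le>k. real (n choose i) * t ^ i)"
    using t by (intro sum_mono mult_left_mono power_decreasing) auto
  also have "\<dots> \<le> (\<Sum>i\<le>n. real (n choose i) * t ^ i)"
    using t assms(2) by (intro sum_mono2) auto
  also have "\<dots> = (t + 1) ^ n"
    by (simp add: binomial_ring)
  also have "\<dots> \<le> exp t ^ n"
    using exp_ge_add_one_self[of t] t by (intro power_mono) (auto simp: add.commute)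
  also have "\<dots> = exp 1 ^ k"
    using assms by (simp add: t_def flip: exp_of_nat_mult exp_of_nat2_mult)
  finally have "t ^ k * real (\<Sum>i\<le>k. n choose i) \<le> exp 1 ^ k" .
  then show ?thesis
    using t assms by (simp add: t_def power_divide field_simps)
qed

lemma homogeneous_system_nontrivial_solution:
  fixes M :: "nat \<Rightarrow> 'a \<Rightarrow> real"
  assumes "finite S" "n < card S"
  shows "\<exists>lam. (\<exists>i\<in>S. lam i \<noteq> 0) \<and> (\<forall>r<n. (\<Sum>i\<in>S. lam i * M r i) = 0)"
  using assms
proof (induction n arbitrary: S M)
  case 0
  then obtain i where "i \<in> S" by fastforce
  then show ?case by (intro exI[of _ "\<lambda>_. 1"]) auto
next
  case (Suc n)
  show ?case
  proof (cases "\<forall>i\<in>S. M n i = 0")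
    case True
    from Suc.IH[of S M] Suc.prems obtain lam where
      "\<exists>i\<in>S. lam i \<noteq> 0" "\<forall>r<n. (\<Sum>i\<in>S. lam i * M r i) = 0"
      by auto
    with True show ?thesis by (intro exI[of _ lam]) (auto simp: less_Suc_eq)
  next
    case False
    then obtain i0 where i0: "i0 \<in> S" "M n i0 \<noteq> 0" by blast
    define S' where "S' = S - {i0}"
    txt \<open>Gaussian elimination: use equation \<open>n\<close> to eliminate the unknown \<open>i0\<close>.\<close>
    define M' where "M' = (\<lambda>r i. M r i - M r i0 * M n i / M n i0)"
    have "finite S'" "n < card S'" using Suc.prems i0 by (auto simp: S'_def)
    from Suc.IH[OF this] obtain mu where
      mu: "\<exists>i\<in>S'. mu i \<noteq> 0" "\<forall>r<n. (\<Sum>i\<in>S'. mu i * M' r i) = 0" by blast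
    define lam where "lam = mu(i0 := - (\<Sum>i\<in>S'. mu i * M n i) / M n i0)"
    have split: "(\<Sum>i\<in>S. lam i * M r i) = lam i0 * M r i0 + (\<Sum>i\<in>S'. mu i * M r i)" for r
      using Suc.prems i0 by (simp add: S'_def sum.remove lam_def)
    have "(\<Sum>i\<in>S. lam i * M r i) = 0" if "r < Suc n" for r
    proof (cases "r = n")
      case True
      then show ?thesis using i0 unfolding split by (simp add: lam_def field_simps)
    next
      case False
      then have "0 = (\<Sum>i\<in>S'. mu i * M' r i)" using mu that by simp
      also have "\<dots> = (\<Sum>i\<in>S'. mu i * M r i) - M r i0 / M n i0 * (\<Sum>i\<in>S'. mu i * M n i)"
        by (simp add: M'_def sum_distrib_left sum_subtractf algebra_simps)
      also have "\<dots> = (\<Sum>i\<in>S. lam i * M r i)"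
        using i0 unfolding split by (simp add: lam_def field_simps)
      finally show ?thesis by simp
    qed
    moreover have "\<exists>i\<in>S. lam i \<noteq> 0" using mu by (auto simp: lam_def S'_def)
    ultimately show ?thesis by blast
  qed
qed

lemma sum_pos_if_signs_agree:
  fixes lam f :: "'a \<Rightarrow> real"
  assumes "finite S" "i \<in> S" "0 < lam i" "\<forall>j\<in>S. 0 < f j \<longleftrightarrow> 0 < lam j"
  shows "0 < (\<Sum>j\<in>S. lam j * f j)"
proof (rule sum_pos2[OF assms(1,2)])
  have sign: "0 < f j \<longleftrightarrow> 0 < lam j" if "j \<in> S" for j
    using assms(4) that by blast
  show "0 < lam i * f i"
    using assms(3) sign[OF assms(2)] by simp
  show "0 \<le> lam j * f j" if "j \<in> S" for j
    using sign[OF that] by (cases "0 < lam j") (simp_all add: mult_nonpos_nonpos)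
qed

lemma sum_affine_eq_zero:
  fixes A :: "'a \<Rightarrow> nat \<Rightarrow> real"
  assumes "\<forall>k<d. (\<Sum>i\<in>S. lam i * A i k) = 0" "(\<Sum>i\<in>S. lam i * c i) = 0"
  shows "(\<Sum>i\<in>S. lam i * ((\<Sum>k<d. A i k * x k) + c i)) = 0"
proof -
  have "(\<Sum>i\<in>S. lam i * ((\<Sum>k<d. A i k * x k) + c i))
      = (\<Sum>k<d. x k * (\<Sum>i\<in>S. lam i * A i k)) + (\<Sum>i\<in>S. lam i * c i)"
    by (simp add: distrib_left sum.distrib sum_distrib_left sum.swap[of _ S] mult_ac)
  then show ?thesis using assms by simp
qed

definition affine_pos_set ::
    "nat \<Rightarrow> nat \<Rightarrow> (nat \<Rightarrow> nat \<Rightarrow> real) \<Rightarrow> (nat \<Rightarrow> real) \<Rightarrow> (nat \<Rightarrow> real) \<Rightarrow> nat set" where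
  "affine_pos_set N d A c x = {i. i < N \<and> 0 < (\<Sum>k<d. A i k * x k) + c i}"

lemma card_shattered_by_affine_pos_sets_le:
  assumes "S \<subseteq> {..<N}" "shatters (affine_pos_set N d A c ` X) S"
  shows "card S \<le> d + 1"
proof (rule ccontr)
  assume "\<not> card S \<le> d + 1"
  then have "d + 1 < card S" by simp
  moreover have "finite S" using assms(1) finite_subset by blast
  ultimately obtain lam0 where lam0: "\<exists>i\<in>S. lam0 i \<noteq> 0"
    "\<forall>r<d+1. (\<Sum>i\<in>S. lam0 i * (if r < d then A i r else c i)) = 0"
    using homogeneous_system_nontrivial_solution[of S "d + 1" "\<lambda>r i. if r < d then A i r else c i"]
    by blast
  have rel0: "\<forall>k<d. (\<Sum>i\<in>S. lam0 i * A i k) = 0" "(\<Sum>i\<in>S. lam0 i * c i) = 0"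
    using lam0(2) by (auto dest: spec[of _ d] simp: less_Suc_eq)
  obtain lam i0 where lam: "i0 \<in> S" "0 < lam i0"
    "\<forall>k<d. (\<Sum>i\<in>S. lam i * A i k) = 0" "(\<Sum>i\<in>S. lam i * c i) = 0"
  proof (cases "\<exists>i\<in>S. 0 < lam0 i")
    case True
    then obtain i0 where "i0 \<in> S" "0 < lam0 i0" by blast
    with rel0 show ?thesis by (intro that[of i0 lam0])
  next
    case False
    then obtain i0 where "i0 \<in> S" "0 < - lam0 i0" using lam0(1) by force
    with rel0 show ?thesis by (intro that[of i0 "\<lambda>i. - lam0 i"]) (auto simp: sum_negf)
  qed
  have "{i \<in> S. 0 < lam i} \<subseteq> S" by blast
  then obtain x where x: "affine_pos_set N d A c x \<inter> S = {i \<in> S. 0 < lam i}"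
    using assms(2) unfolding shatters_def by blast
  have sign: "0 < (\<Sum>k<d. A i k * x k) + c i \<longleftrightarrow> 0 < lam i" if "i \<in> S" for i
  proof -
    have "i < N" using assms(1) that by blast
    with x that show ?thesis unfolding affine_pos_set_def by blast
  qed
  have "0 < (\<Sum>i\<in>S. lam i * ((\<Sum>k<d. A i k * x k) + c i))"
    by (rule sum_pos_if_signs_agree[of S i0 lam, OF \<open>finite S\<close> lam(1,2)]) (simp add: sign)
  with sum_affine_eq_zero[OF lam(3,4)] show False by simp
qed

lemma card_affine_pos_sets_le:
  shows "finite (affine_pos_set N d A c ` X)"
    and "card (affine_pos_set N d A c ` X) \<le> (\<Sum>i\<le>d+1. N choose i)"
proof -
  have sub: "affine_pos_set N d A c ` X \<subseteq> Pow {..<N}" by (auto simp: affine_pos_set_def)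
  then show "finite (affine_pos_set N d A c ` X)" by (rule finite_subset) simp
  have "card (affine_pos_set N d A c ` X) \<le> card (shattered_sets (affine_pos_set N d A c ` X) {..<N})"
    using sub by (intro card_le_card_shattered_sets) simp_all
  also have "\<dots> \<le> card {S. S \<subseteq> {..<N} \<and> card S \<le> d + 1}"
  proof (rule card_mono)
    show "finite {S. S \<subseteq> {..<N} \<and> card S \<le> d + 1}"
      by (rule finite_subset[of _ "Pow {..<N}"]) auto
    show "shattered_sets (affine_pos_set N d A c ` X) {..<N} \<subseteq> {S. S \<subseteq> {..<N} \<and> card S \<le> d + 1}"
      unfolding shattered_sets_def using card_shattered_by_affine_pos_sets_le by blast
  qed
  also have "\<dots> = (\<Sum>i\<le>d+1. N choose i)" by (simp add: card_subsets_card_le)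
  finally show "card (affine_pos_set N d A c ` X) \<le> (\<Sum>i\<le>d+1. N choose i)" .
qed

lemma card_affine_Delta_image_le:
  shows "finite ((\<lambda>x. Delta N (\<lambda>i. (\<Sum>k<d. A i k * x k) + c i)) ` X)"
    and "card ((\<lambda>x. Delta N (\<lambda>i. (\<Sum>k<d. A i k * x k) + c i)) ` X) \<le> (\<Sum>i\<le>d+1. N choose i)"
proof -
  define diag :: "nat set \<Rightarrow> nat \<Rightarrow> nat \<Rightarrow> real" where
    "diag = (\<lambda>S i j. if i = j \<and> i \<in> S then 1 else 0)"
  have "Delta N (\<lambda>i. (\<Sum>k<d. A i k * x k) + c i) = diag (affine_pos_set N d A c x)" for x
    by (simp add: Delta_def diag_def affine_pos_set_def)
  then have eq: "(\<lambda>x. Delta N (\<lambda>i. (\<Sum>k<d. A i k * x k) + c i)) ` X = diag ` affine_pos_set N d A c ` X"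
    unfolding image_image by (rule image_cong[OF refl])
  show "finite ((\<lambda>x. Delta N (\<lambda>i. (\<Sum>k<d. A i k * x k) + c i)) ` X)"
    unfolding eq using card_affine_pos_sets_le(1) by (rule finite_imageI)
  have "card (diag ` affine_pos_set N d A c ` X) \<le> card (affine_pos_set N d A c ` X)"
    using card_affine_pos_sets_le(1) by (rule card_image_le)
  also have "\<dots> \<le> (\<Sum>i\<le>d+1. N choose i)"
    by (rule card_affine_pos_sets_le(2))
  finally show "card ((\<lambda>x. Delta N (\<lambda>i. (\<Sum>k<d. A i k * x k) + c i)) ` X) \<le> (\<Sum>i\<le>d+1. N choose i)"
    unfolding eq .
qed

lemma preact_affine:
  assumes "\<forall>j<in_dim d N l. y j = (\<Sum>k<d. H j k * x k) + h j" "i < N"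
  shows "preact d N W b l y i = (\<Sum>k<d. (\<Sum>j<in_dim d N l. W l i j * H j k) * x k)
           + ((\<Sum>j<in_dim d N l. W l i j * h j) + b l i)"
proof -
  have "preact d N W b l y i = (\<Sum>j<in_dim d N l. W l i j * ((\<Sum>k<d. H j k * x k) + h j)) + b l i"
    using assms by (simp add: preact_def)
  also have "\<dots> = (\<Sum>k<d. (\<Sum>j<in_dim d N l. W l i j * H j k) * x k)
           + ((\<Sum>j<in_dim d N l. W l i j * h j) + b l i)"
    by (simp add: distrib_left sum.distrib sum_distrib_left sum_distrib_right mult.assoc
        sum.swap[of _ "{..<in_dim d N l}" "{..<d}"])
  finally show ?thesis .
qed

lemma hidden_affine_on_pattern_class:
  "\<exists>H h. \<forall>x. (\<forall>m<l. Dpat d N W b x m = Dpat d N W b x0 m) \<longrightarrow>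
     (\<forall>j<in_dim d N l. hidden d N W b x l j = (\<Sum>k<d. H j k * x k) + h j)"
proof (induction l)
  case 0
  have "(\<Sum>k<d. (if j = k then 1 else 0) * x k) = x j" if "j < d" for x :: "nat \<Rightarrow> real" and j
  proof -
    have "(\<Sum>k<d. (if j = k then 1 else 0) * x k) = (\<Sum>k<d. if j = k then x k else 0)"
      by (rule sum.cong) auto
    with that show ?thesis by simp
  qed
  then show ?case by (intro exI[of _ "\<lambda>j k. if j = k then 1 else 0"] exI[of _ "\<lambda>_. 0"]) (simp add: in_dim_def)
next
  case (Suc l)
  then obtain H h where Hh: "\<forall>x. (\<forall>m<l. Dpat d N W b x m = Dpat d N W b x0 m) \<longrightarrow>
     (\<forall>j<in_dim d N l. hidden d N W b x l j = (\<Sum>k<d. H j k * x k) + h j)" by blast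
  define A where "A = (\<lambda>i k. \<Sum>j<in_dim d N l. W l i j * H j k)"
  define c where "c = (\<lambda>i. (\<Sum>j<in_dim d N l. W l i j * h j) + b l i)"
  define active where "active = (\<lambda>i. 0 < preact d N W b l (hidden d N W b x0 l) i)"
  have step: "hidden d N W b x (Suc l) j =
        (\<Sum>k<d. (if active j then A j k else 0) * x k) + (if active j then c j else 0)"
    if same: "\<forall>m<Suc l. Dpat d N W b x m = Dpat d N W b x0 m" and j: "j < in_dim d N (Suc l)" for x j
  proof -
    have jN: "j < N" using j by (simp add: in_dim_def)
    have pre: "preact d N W b l (hidden d N W b x l) j = (\<Sum>k<d. A j k * x k) + c j"
      using preact_affine[OF _ jN] Hh same by (simp add: A_def c_def)
    have "Dpat d N W b x l j j = Dpat d N W b x0 l j j" using same by simp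
    then have "0 < preact d N W b l (hidden d N W b x l) j \<longleftrightarrow> active j"
      using jN by (simp add: Dpat_def Delta_def active_def split: if_splits)
    then show ?thesis using pre by (auto simp: max_def)
  qed
  show ?case
    by (intro exI[of _ "\<lambda>i k. if active i then A i k else 0"] exI[of _ "\<lambda>i. if active i then c i else 0"]
        allI impI) (rule step; assumption)
qed

definition pattern_region ::
    "nat \<Rightarrow> nat \<Rightarrow> (nat \<Rightarrow> nat \<Rightarrow> nat \<Rightarrow> real) \<Rightarrow> (nat \<Rightarrow> nat \<Rightarrow> real) \<Rightarrow> nat
      \<Rightarrow> (nat \<Rightarrow> nat \<Rightarrow> real) list \<Rightarrow> (nat \<Rightarrow> real) set" where
  "pattern_region d N W b k p = {x. (\<forall>j\<ge>d. x j = 0) \<and> map (Dpat d N W b x) (rev [0..<k]) = p}"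

lemma patterns_Suc:
  "patterns d N (Suc k) W b =
     (\<Union>p\<in>patterns d N k W b. (\<lambda>x. Dpat d N W b x k # p) ` pattern_region d N W b k p)"
  by (auto simp: patterns_def pattern_region_def)

lemma Dpat_affine_on_pattern_region:
  "\<exists>A c. \<forall>x\<in>pattern_region d N W b k p.
     Dpat d N W b x k = Delta N (\<lambda>i. (\<Sum>kk<d. A i kk * x kk) + c i)"
proof (cases "pattern_region d N W b k p = {}")
  case False
  then obtain x0 where x0: "x0 \<in> pattern_region d N W b k p" by blast
  obtain H h where Hh: "\<forall>x. (\<forall>m<k. Dpat d N W b x m = Dpat d N W b x0 m) \<longrightarrow>
      (\<forall>j<in_dim d N k. hidden d N W b x k j = (\<Sum>kk<d. H j kk * x kk) + h j)"
    using hidden_affine_on_pattern_class by blast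
  define A where "A = (\<lambda>i kk. \<Sum>j<in_dim d N k. W k i j * H j kk)"
  define c where "c = (\<lambda>i. (\<Sum>j<in_dim d N k. W k i j * h j) + b k i)"
  have "Dpat d N W b x k = Delta N (\<lambda>i. (\<Sum>kk<d. A i kk * x kk) + c i)"
    if "x \<in> pattern_region d N W b k p" for x
  proof -
    have "\<forall>m<k. Dpat d N W b x m = Dpat d N W b x0 m"
      using that x0 by (auto simp: pattern_region_def map_eq_conv)
    then have "preact d N W b k (hidden d N W b x k) i = (\<Sum>kk<d. A i kk * x kk) + c i" if "i < N" for i
      using preact_affine[OF _ that] Hh by (simp add: A_def c_def)
    then show ?thesis unfolding Dpat_def Delta_def by (intro ext) auto
  qed
  then show ?thesis by blast
qed simp

lemma card_next_layer_patterns_le: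
  shows "finite ((\<lambda>x. Dpat d N W b x k) ` pattern_region d N W b k p)"
    and "card ((\<lambda>x. Dpat d N W b x k) ` pattern_region d N W b k p) \<le> (\<Sum>i\<le>d+1. N choose i)"
proof -
  obtain A c where "\<forall>x\<in>pattern_region d N W b k p.
      Dpat d N W b x k = Delta N (\<lambda>i. (\<Sum>kk<d. A i kk * x kk) + c i)"
    using Dpat_affine_on_pattern_region by blast
  then have "(\<lambda>x. Dpat d N W b x k) ` pattern_region d N W b k p
      = (\<lambda>x. Delta N (\<lambda>i. (\<Sum>kk<d. A i kk * x kk) + c i)) ` pattern_region d N W b k p"
    by (intro image_cong) simp_all
  then show "finite ((\<lambda>x. Dpat d N W b x k) ` pattern_region d N W b k p)"
    and "card ((\<lambda>x. Dpat d N W b x k) ` pattern_region d N W b k p) \<le> (\<Sum>i\<le>d+1. N choose i)"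
    using card_affine_Delta_image_le by simp_all
qed

lemma card_patterns_le:
  shows "finite (patterns d N L W b)"
    and "card (patterns d N L W b) \<le> (\<Sum>i\<le>d+1. N choose i) ^ L"
proof -
  let ?B = "\<Sum>i\<le>d+1. N choose i"
  have "finite (patterns d N L W b) \<and> card (patterns d N L W b) \<le> ?B ^ L"
  proof (induction L)
    case 0
    have "patterns d N 0 W b = {[]}" by (auto simp: patterns_def intro!: exI[of _ "\<lambda>_. 0"])
    then show ?case by simp
  next
    case (Suc k)
    let ?next = "\<lambda>p. (\<lambda>x. Dpat d N W b x k # p) ` pattern_region d N W b k p"
    have next_eq: "?next p = (\<lambda>D. D # p) ` (\<lambda>x. Dpat d N W b x k) ` pattern_region d N W b k p" for p
      by (simp add: image_image)
    have "card (?next p) \<le> ?B" for p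
      unfolding next_eq using card_next_layer_patterns_le card_image_le le_trans by metis
    moreover have "finite (?next p)" for p
      unfolding next_eq using card_next_layer_patterns_le(1) by blast
    ultimately have "finite (patterns d N (Suc k) W b)"
      and "card (patterns d N (Suc k) W b) \<le> card (patterns d N k W b) * ?B"
      using Suc.IH unfolding patterns_Suc
      by (auto intro!: card_UN_le[THEN le_trans] sum_bounded_above[THEN le_trans])
    with Suc.IH show ?case by (simp add: mult.commute order_trans)
  qed
  then show "finite (patterns d N L W b)" "card (patterns d N L W b) \<le> ?B ^ L" by blast+
qed

theorem lemma5p7:
  fixes d N L :: nat
    and W :: "nat \<Rightarrow> nat \<Rightarrow> nat \<Rightarrow> real"
    and b :: "nat \<Rightarrow> nat \<Rightarrow> real"
  assumes "d + 2 < N"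
  shows "finite (patterns d N L W b) \<and>
         real (card (patterns d N L W b)) \<le> (exp 1 * real N / real (d + 1)) ^ (L * (d + 1))"
proof -
  let ?B = "\<Sum>i\<le>d+1. N choose i"
  have "real (card (patterns d N L W b)) \<le> real ?B ^ L"
    using card_patterns_le(2) by (metis of_nat_le_iff of_nat_power)
  also have "\<dots> \<le> ((exp 1 * real N / real (d + 1)) ^ (d + 1)) ^ L"
    using sum_choose_le_exp_power[of "d + 1" N] assms by (intro power_mono of_nat_0_le_iff) simp
  also have "\<dots> = (exp 1 * real N / real (d + 1)) ^ (L * (d + 1))"
    by (metis power_mult mult.commute)
  finally show ?thesis
    using card_patterns_le(1) by blast
qed

end
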